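(* For every sufficiently large integer $n$ (in particular whenever $2ne^{-n/80}+n^{\sqrt n}2^{-(n-1)}+n^{n/7+1}2^{-n^2/20}<1$) there exists a tournament $F_0$ on $n$ vertices such that: (I) every vertex of $F_0$ has out-degree at most $2n/3$ and in-degree at most $2n/3$; (II) there are no disjoint sets $A_1,A_2\subseteq V(F_0)$ with $|A_1|=|A_2|=\lceil\sqrt n\,\rceil$ such that $(a_1,a_2)$ is an arc of $F_0$ for all $a_1\in A_1$, $a_2\in A_2$; (III) for every $S\subseteq V(F_0)$ with $|S|\ge \frac{2n}{13}-\sqrt n$, the induced sub-tournament $F_0[S]$ contains a directed cycle.
   Context: A tournament is a loopless digraph in which every pair of distinct vertices is joined by exactly one arc. For $S\subseteq V(F_0)$, $F_0[S]$ is the induced sub-digraph on $S$. *)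

theory Defs
  imports Complex_Main
begin

definition tournament :: "'a set \<Rightarrow> ('a \<Rightarrow> 'a \<Rightarrow> bool) \<Rightarrow> bool" where
  "tournament V F \<longleftrightarrow> finite V \<and>
     (\<forall>x y. F x y \<longrightarrow> x \<in> V \<and> y \<in> V) \<and>
     (\<forall>x\<in>V. \<not> F x x) \<and>
     (\<forall>x\<in>V. \<forall>y\<in>V. x \<noteq> y \<longrightarrow> (F x y \<or> F y x) \<and> \<not> (F x y \<and> F y x))"

definition out_degree :: "'a set \<Rightarrow> ('a \<Rightarrow> 'a \<Rightarrow> bool) \<Rightarrow> 'a \<Rightarrow> nat" where
  "out_degree V F x = card {y\<in>V. F x y}"

definition in_degree :: "'a set \<Rightarrow> ('a \<Rightarrow> 'a \<Rightarrow> bool) \<Rightarrow> 'a \<Rightarrow> nat" where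
  "in_degree V F x = card {y\<in>V. F y x}"

definition induced :: "('a \<Rightarrow> 'a \<Rightarrow> bool) \<Rightarrow> 'a set \<Rightarrow> ('a \<Rightarrow> 'a \<Rightarrow> bool)" where
  "induced F S = (\<lambda>x y. F x y \<and> x \<in> S \<and> y \<in> S)"

definition has_dicycle :: "'a set \<Rightarrow> ('a \<Rightarrow> 'a \<Rightarrow> bool) \<Rightarrow> bool" where
  "has_dicycle V F \<longleftrightarrow> (\<exists>xs. xs \<noteq> [] \<and> distinct xs \<and> set xs \<subseteq> V \<and>
     (\<forall>i < length xs. F (xs ! i) (xs ! ((i + 1) mod length xs))))"

end

theory Submission
  imports Defs
begin

text \<open>Tournaments on \<open>{0..<n}\<close> are encoded by sets of pairs \<open>i < j\<close>, and a union bound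
  shows that fewer than half of them violate (I) and fewer than half violate (II).
  A vertex of out-degree at least \<open>t\<close> is charged \<open>2^-t\<close> against the weight
  \<open>\<Sum>W. 2^|W| = 3^(n-1)\<close> of all possible out-neighbourhoods, which bounds the bad
  tournaments for (I) by \<open>2n\<cdot>3^(n-1)/2^(n-1+t)\<close>; for (II) there are at most
  \<open>(n choose s)^2\<close> pairs of \<open>s\<close>-sets, \<open>s = \<lceil>\<surd>n\<rceil>\<close>, each forcing \<open>s^2\<close> arcs.
  Property (III) follows from (II): a tournament without directed cycles is transitive, so
  on \<open>2s\<close> or more vertices its top \<open>s\<close> vertices dominate \<open>s\<close> further ones.
  The numerical hypothesis is only used to guarantee \<open>n \<ge> 481\<close>.\<close>

section \<open>Numerical estimates\<close>

lemma exp_div_8_le_power: "exp (real k / 8) \<le> (8/7::real) ^ k"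
proof -
  have "1 + (-1/8) \<le> exp (-1/8::real)" by (rule exp_ge_add_one_self)
  then have base: "exp (1/8::real) \<le> 8/7"
    using exp_minus[of "1/8::real"] by (simp add: field_simps)
  have "exp (real k / 8) = exp (1/8) ^ k" using exp_of_nat_mult[of k "1/8::real"] by simp
  also have "\<dots> \<le> (8/7) ^ k" by (rule power_mono[OF base]) simp
  finally show ?thesis .
qed

lemma ge_481_if_exp_bound:
  fixes n :: nat
  assumes "1 \<le> n" and small: "2 * real n * exp (- real n / 80) < 1"
  shows "481 \<le> n"
proof (rule ccontr)
  assume "\<not> 481 \<le> n"
  then have "n \<le> 480" by simp
  have exp_large: "2 * real n < exp (real n / 80)"
    using small by (simp add: exp_minus field_simps)
  consider "n \<le> 79" | "80 \<le> n" "n \<le> 160" | "160 \<le> n" "n \<le> 400" | "400 \<le> n" "n \<le> 480"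
    using \<open>n \<le> 480\<close> by linarith
  then show False
  proof cases
    case 1
    have "2 * real n * (1 - real n / 80) \<le> 2 * real n * exp (- real n / 80)"
      using exp_ge_add_one_self[of "- real n / 80"] by (intro mult_left_mono) auto
    moreover have "(real n - 1) * (79 - real n) \<ge> 0"
      using \<open>1 \<le> n\<close> 1 by simp
    ultimately show False using small by (simp add: algebra_simps)
  next
    case 2
    have "exp (real n / 80) \<le> exp (real 16 / 8)" using 2 by simp
    also have "\<dots> \<le> (8/7) ^ 16" by (rule exp_div_8_le_power)
    also have "\<dots> \<le> 160" by (simp add: power_divide divide_le_eq)
    finally show False using exp_large 2 by simp
  next
    case 3
    have "exp (real n / 80) \<le> exp (real 40 / 8)" using 3 by simp
    also have "\<dots> \<le> (8/7) ^ 40" by (rule exp_div_8_le_power)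
    also have "\<dots> \<le> 320" by (simp add: power_divide divide_le_eq)
    finally show False using exp_large 3 by simp
  next
    case 4
    have "exp (real n / 80) \<le> exp (real 48 / 8)" using 4 by simp
    also have "\<dots> \<le> (8/7) ^ 48" by (rule exp_div_8_le_power)
    also have "\<dots> \<le> 800" by (simp add: power_divide divide_le_eq)
    finally show False using exp_large 4 by simp
  qed
qed

lemma cube_mult_power_27_less_power_32: "100 \<le> n \<Longrightarrow> 8 * n ^ 3 * 27 ^ (n - 1) < (32::nat) ^ (n - 1)"
proof (induction n rule: dec_induct)
  case base
  then show ?case by simp
next
  case (step m)
  have "(100 * (m + 1)) ^ 3 \<le> (101 * m) ^ 3"
    using step(1) by (intro power_mono) simp_all
  then have "27 * (100 ^ 3 * (m + 1) ^ 3) \<le> 27 * (101 ^ 3 * m ^ 3)"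
    by (simp only: power_mult_distrib)
  then have cube_step: "27 * (m + 1) ^ 3 \<le> 32 * m ^ 3"
    by simp
  have "8 * (Suc m) ^ 3 * 27 ^ (Suc m - 1) = 8 * (27 * (m + 1) ^ 3) * 27 ^ (m - 1)"
    using step(1) by (cases m) (simp_all add: algebra_simps)
  also have "\<dots> \<le> 32 * (8 * m ^ 3 * 27 ^ (m - 1))" using cube_step by simp
  also have "\<dots> < 32 * 32 ^ (m - 1)" using step(3) by simp
  also have "\<dots> = 32 ^ (Suc m - 1)" using step(1) by (cases m) simp_all
  finally show ?case .
qed

lemma fourth_power_le_power_2: "18 \<le> s \<Longrightarrow> 2 * s ^ 4 \<le> (2::nat) ^ s"
proof (induction s rule: dec_induct)
  case base
  then show ?case by simp
next
  case (step m)
  have "(18 * (m + 1)) ^ 4 \<le> (19 * m) ^ 4"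
    using step(1) by (intro power_mono) simp_all
  then have "18 ^ 4 * (m + 1) ^ 4 \<le> 19 ^ 4 * m ^ 4"
    by (simp only: power_mult_distrib)
  then have "(m + 1) ^ 4 \<le> 2 * m ^ 4"
    by simp
  then show ?case using step(3) by simp
qed

lemma degree_union_bound:
  fixes n :: nat
  assumes "481 \<le> n"
  shows "4 * n * 3 ^ (n - 1) < (2::nat) ^ (n - 1 + (2 * n div 3 + 1))"
proof -
  have "((3::nat) ^ (n - 1)) ^ 3 = (3 ^ 3) ^ (n - 1)"
    by (metis power_mult mult.commute)
  then have "(4 * n * 3 ^ (n - 1)) ^ 3 = 8 * (8 * n ^ 3 * 27 ^ (n - 1))"
    by (simp add: power_mult_distrib)
  also have "\<dots> < 8 * 32 ^ (n - 1)"
    using assms by (intro mult_strict_left_mono cube_mult_power_27_less_power_32) simp_all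
  also have "(8::nat) * 32 ^ (n - 1) = 2 ^ (5 * (n - 1) + 3)"
    by (simp add: power_add power_mult)
  also have "\<dots> \<le> 2 ^ (3 * (n - 1 + (2 * n div 3 + 1)))"
    using assms by (intro power_increasing) (presburger, simp)
  also have "\<dots> = (2 ^ (n - 1 + (2 * n div 3 + 1))) ^ 3"
    by (metis power_mult mult.commute)
  finally show ?thesis by (rule power_less_imp_less_base) simp
qed

lemma bipartite_union_bound:
  fixes n s :: nat
  assumes "22 \<le> s" and "n \<le> s * s"
  shows "2 * (n choose s) ^ 2 < (2::nat) ^ (s * s)"
proof -
  have "n choose s \<le> (s * s) ^ s"
  proof (cases "s \<le> n")
    case True
    then have "n choose s \<le> n ^ s" by (rule binomial_le_pow)
    also have "\<dots> \<le> (s * s) ^ s" using assms(2) by (rule power_mono) simp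
    finally show ?thesis .
  qed (simp add: binomial_eq_0)
  then have "(n choose s) ^ 2 \<le> ((s * s) ^ s) ^ 2" by (rule power_mono) simp
  also have "\<dots> = (s ^ 4) ^ s"
    by (simp add: power_mult[symmetric] power_mult_distrib mult.commute power4_eq_xxxx power2_eq_square)
  finally have "2 * (n choose s) ^ 2 \<le> 2 * (s ^ 4) ^ s" by simp
  also have "\<dots> < 2 ^ s * (s ^ 4) ^ s"
    using assms(1) power_strict_increasing[of 1 s "2::nat"] by simp
  also have "\<dots> = (2 * s ^ 4) ^ s" by (simp add: power_mult_distrib)
  also have "\<dots> \<le> (2 ^ s) ^ s"
    using assms(1) by (intro power_mono fourth_power_le_power_2) simp_all
  also have "\<dots> = 2 ^ (s * s)" by (simp add: power_mult)
  finally show ?thesis .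
qed

lemma ceiling_sqrt_bounds:
  fixes n :: nat
  assumes "481 \<le> n" and s: "s = nat \<lceil>sqrt (real n)\<rceil>"
  shows "22 \<le> s" and "n \<le> s * s" and "2 * real s \<le> 2 * real n / 13 - sqrt (real n)"
proof -
  have "real s = of_int \<lceil>sqrt (real n)\<rceil>" using s by simp
  then have s_ge: "sqrt (real n) \<le> real s" and s_le: "real s \<le> sqrt (real n) + 1"
    by simp_all
  have "21 < sqrt (real n)" by (rule real_less_rsqrt) (use assms(1) in simp)
  then show "22 \<le> s" using s_ge by simp
  have "real n = sqrt (real n) * sqrt (real n)" by simp
  also have "\<dots> \<le> real s * real s" using s_ge by (intro mult_mono) auto
  finally show "n \<le> s * s" by (simp flip: of_nat_mult)
  have "21 * 3 \<le> sqrt (real n) * (2 * sqrt (real n) - 39)"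
    using \<open>21 < sqrt (real n)\<close> by (intro mult_mono) auto
  also have "\<dots> = 2 * real n - 39 * sqrt (real n)"
    by (simp add: algebra_simps)
  finally have "2 * sqrt (real n) + 2 \<le> 2 * real n / 13 - sqrt (real n)"
    by simp
  then show "2 * real s \<le> 2 * real n / 13 - sqrt (real n)" using s_le by linarith
qed

section \<open>Counting subsets\<close>

lemma card_Pow_filter_Int:
  assumes "finite P" and "Q \<subseteq> P"
  shows "card {D \<in> Pow P. \<Phi> (D \<inter> Q)} = card {R \<in> Pow Q. \<Phi> R} * 2 ^ (card P - card Q)"
proof -
  have split: "(R \<union> E) \<inter> Q = R" if "R \<subseteq> Q" and "E \<subseteq> P - Q" for R E
    using that by blast
  have "bij_betw (\<lambda>D. (D \<inter> Q, D - Q)) {D \<in> Pow P. \<Phi> (D \<inter> Q)} ({R \<in> Pow Q. \<Phi> R} \<times> Pow (P - Q))"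
    by (rule bij_betw_byWitness[where f' = "\<lambda>(R, E). R \<union> E"])
      (use assms split in auto)
  then have "card {D \<in> Pow P. \<Phi> (D \<inter> Q)} = card ({R \<in> Pow Q. \<Phi> R} \<times> Pow (P - Q))"
    by (rule bij_betw_same_card)
  also have "\<dots> = card {R \<in> Pow Q. \<Phi> R} * 2 ^ (card P - card Q)"
    using assms by (simp add: card_cartesian_product card_Pow card_Diff_subset finite_subset)
  finally show ?thesis .
qed

lemma sum_Pow_power_2_card: "finite X \<Longrightarrow> (\<Sum>W\<in>Pow X. (2::nat) ^ card W) = 3 ^ card X"
proof (induction X rule: finite_induct)
  case empty
  then show ?case by simp
next
  case (insert x X)
  have "(\<Sum>W\<in>Pow (insert x X). (2::nat) ^ card W) =
        (\<Sum>W\<in>Pow X. 2 ^ card W) + (\<Sum>W\<in>insert x ` Pow X. 2 ^ card W)"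
    unfolding Pow_insert using insert by (intro sum.union_disjoint) auto
  also have "(\<Sum>W\<in>insert x ` Pow X. (2::nat) ^ card W) = (\<Sum>W\<in>Pow X. 2 ^ card (insert x W))"
    using insert by (subst sum.reindex) (auto intro!: inj_onI simp: insert_ident)
  also have "\<dots> = (\<Sum>W\<in>Pow X. 2 * 2 ^ card W)"
    using insert by (intro sum.cong) (auto simp: card_insert_if finite_subset)
  finally show ?case using insert by (simp add: sum_distrib_left[symmetric])
qed

lemma card_large_subsets_le:
  assumes "finite X"
  shows "card {W \<in> Pow X. t \<le> card W} * 2 ^ t \<le> (3::nat) ^ card X"
proof -
  have "card {W \<in> Pow X. t \<le> card W} * 2 ^ t = (\<Sum>W\<in>{W \<in> Pow X. t \<le> card W}. (2::nat) ^ t)"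
    by simp
  also have "\<dots> \<le> (\<Sum>W\<in>{W \<in> Pow X. t \<le> card W}. 2 ^ card W)"
    by (rule sum_mono) (simp add: power_increasing)
  also have "\<dots> \<le> (\<Sum>W\<in>Pow X. 2 ^ card W)"
    by (rule sum_mono2) (use assms in auto)
  also have "\<dots> = 3 ^ card X" using assms by (rule sum_Pow_power_2_card)
  finally show ?thesis .
qed

lemma finite_disjoint_subset_pairs:
  assumes "finite X"
  shows "finite {(A1, A2). A1 \<subseteq> X \<and> A2 \<subseteq> X \<and> A1 \<inter> A2 = {} \<and> card A1 = s \<and> card A2 = s}"
  by (rule finite_subset[of _ "Pow X \<times> Pow X"]) (use assms in auto)

lemma card_disjoint_subset_pairs_le:
  assumes "finite X"
  shows "card {(A1, A2). A1 \<subseteq> X \<and> A2 \<subseteq> X \<and> A1 \<inter> A2 = {} \<and> card A1 = s \<and> card A2 = s}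
    \<le> (card X choose s) ^ 2"
proof -
  let ?K = "{A. A \<subseteq> X \<and> card A = s}"
  have "card {(A1, A2). A1 \<subseteq> X \<and> A2 \<subseteq> X \<and> A1 \<inter> A2 = {} \<and> card A1 = s \<and> card A2 = s}
      \<le> card (?K \<times> ?K)"
    using assms by (intro card_mono) auto
  also have "\<dots> = (card X choose s) ^ 2"
    using n_subsets[OF assms, of s] by (simp add: card_cartesian_product power2_eq_square)
  finally show ?thesis .
qed

section \<open>Tournaments without directed cycles\<close>

lemma transitive_if_not_has_dicycle:
  assumes "tournament V F" and "S \<subseteq> V" and "\<not> has_dicycle S (induced F S)"
  shows "\<forall>x\<in>S. \<forall>y\<in>S. \<forall>z\<in>S. F x y \<longrightarrow> F y z \<longrightarrow> F x z"
proof (intro ballI impI)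
  fix x y z assume xyz: "x \<in> S" "y \<in> S" "z \<in> S" "F x y" "F y z"
  from assms(1) have irrefl: "\<forall>x\<in>V. \<not> F x x"
    and total: "\<forall>x\<in>V. \<forall>y\<in>V. x \<noteq> y \<longrightarrow> (F x y \<or> F y x) \<and> \<not> (F x y \<and> F y x)"
    unfolding tournament_def by blast+
  have "x \<noteq> y" "y \<noteq> z" using xyz assms(2) irrefl by auto
  then have "distinct [x, y, z]"
    using xyz assms(2) total by auto
  show "F x z"
  proof (rule ccontr)
    assume "\<not> F x z"
    then have "F z x" using xyz assms(2) total \<open>distinct [x, y, z]\<close> by auto
    then have "has_dicycle S (induced F S)"
      unfolding has_dicycle_def using xyz \<open>distinct [x, y, z]\<close>
      by (intro exI[of _ "[x, y, z]"]) (auto simp: induced_def less_Suc_eq)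
    then show False using assms(3) by contradiction
  qed
qed

lemma transitive_top_subset:
  assumes "finite T" and "\<forall>x\<in>T. \<not> G x x" and "\<forall>x\<in>T. \<forall>y\<in>T. x \<noteq> y \<longrightarrow> G x y \<or> G y x"
    and "\<forall>x\<in>T. \<forall>y\<in>T. \<forall>z\<in>T. G x y \<longrightarrow> G y z \<longrightarrow> G x z" and "k \<le> card T"
  shows "\<exists>U\<subseteq>T. card U = k \<and> (\<forall>u\<in>U. \<forall>w\<in>T - U. G u w)"
  using \<open>k \<le> card T\<close>
proof (induction k)
  case 0
  show ?case by (intro exI[of _ "{}"]) simp
next
  case (Suc k)
  then have "k \<le> card T" by simp
  then obtain U where U: "U \<subseteq> T" "card U = k" "\<forall>u\<in>U. \<forall>w\<in>T - U. G u w"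
    using Suc.IH by blast
  have "finite U" using U(1) assms(1) by (rule finite_subset)
  then have "T - U \<noteq> {}" using Suc.prems U by (auto simp: card_Diff_subset)
  define g where "g x = card {y \<in> T - U. G x y}" for x
  obtain x where x: "x \<in> T - U" and x_max: "\<forall>y\<in>T - U. g y \<le> g x"
  proof -
    have "Max (g ` (T - U)) \<in> g ` (T - U)"
      using \<open>T - U \<noteq> {}\<close> assms(1) by (intro Max_in) auto
    then obtain x where "x \<in> T - U" "g x = Max (g ` (T - U))" by auto
    then show thesis using that[of x] assms(1) by (auto intro: Max_ge)
  qed
  \<comment> \<open>A vertex of maximal out-degree in \<open>T - U\<close> beats all others there, by transitivity.\<close>
  have beats: "G x w" if w: "w \<in> T - U" "w \<noteq> x" for w
  proof (rule ccontr)
    assume "\<not> G x w"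
    then have "G w x" using assms(3) x w by blast
    then have "{y \<in> T - U. G x y} \<subset> {y \<in> T - U. G w y}"
      using assms(2,4) x w by blast
    then have "g x < g w" unfolding g_def by (rule psubset_card_mono[rotated]) (use assms(1) in simp)
    then show False using x_max w by force
  qed
  show ?case
    using U x beats \<open>finite U\<close> by (intro exI[of _ "insert x U"]) auto
qed

definition has_directed_biclique :: "'a set \<Rightarrow> ('a \<Rightarrow> 'a \<Rightarrow> bool) \<Rightarrow> nat \<Rightarrow> bool" where
  "has_directed_biclique V F s \<longleftrightarrow> (\<exists>A1 A2. A1 \<subseteq> V \<and> A2 \<subseteq> V \<and> A1 \<inter> A2 = {} \<and>
     card A1 = s \<and> card A2 = s \<and> (\<forall>a1\<in>A1. \<forall>a2\<in>A2. F a1 a2))"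

lemma has_dicycle_if_no_directed_biclique:
  assumes "tournament V F" and "S \<subseteq> V" and "2 * s \<le> card S"
    and "\<not> has_directed_biclique V F s"
  shows "has_dicycle S (induced F S)"
proof (rule ccontr)
  assume "\<not> has_dicycle S (induced F S)"
  with assms(1,2) have trans: "\<forall>x\<in>S. \<forall>y\<in>S. \<forall>z\<in>S. F x y \<longrightarrow> F y z \<longrightarrow> F x z"
    by (rule transitive_if_not_has_dicycle)
  have "finite S" using assms(1,2) unfolding tournament_def by (meson finite_subset)
  have irrefl: "\<forall>x\<in>S. \<not> F x x" and total: "\<forall>x\<in>S. \<forall>y\<in>S. x \<noteq> y \<longrightarrow> F x y \<or> F y x"
    using assms(1,2) unfolding tournament_def by blast+
  have "s \<le> card S" using assms(3) by simp
  then obtain U where U: "U \<subseteq> S" "card U = s" "\<forall>u\<in>U. \<forall>w\<in>S - U. F u w"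
    using transitive_top_subset[OF \<open>finite S\<close> irrefl total trans] by blast
  have "s \<le> card (S - U)" using U assms(3) \<open>finite S\<close> by (simp add: card_Diff_subset finite_subset)
  then obtain A2 where A2: "A2 \<subseteq> S - U" "card A2 = s"
    by (meson obtain_subset_with_card_n)
  have "U \<subseteq> V" "A2 \<subseteq> V" "U \<inter> A2 = {}" "\<forall>a1\<in>U. \<forall>a2\<in>A2. F a1 a2"
    using U A2 assms(2) by auto
  with U(2) A2(2) assms(4) show False unfolding has_directed_biclique_def by blast
qed

section \<open>Counting orientations\<close>

text \<open>A set \<open>D\<close> of pairs \<open>i < j < n\<close> orients each such pair as \<open>i \<rightarrow> j\<close> if it lies in \<open>D\<close>
  and as \<open>j \<rightarrow> i\<close> otherwise; \<open>D \<mapsto> orient n D\<close> is a bijection from \<open>Pow (upper_pairs n)\<close> onto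
  the tournaments on \<open>{0..<n}\<close>.\<close>

definition upper_pairs :: "nat \<Rightarrow> (nat \<times> nat) set" where
  "upper_pairs n = {(i, j). i < j \<and> j < n}"

definition orient :: "nat \<Rightarrow> (nat \<times> nat) set \<Rightarrow> nat \<Rightarrow> nat \<Rightarrow> bool" where
  "orient n D x y \<longleftrightarrow> (x, y) \<in> D \<or> ((y, x) \<in> upper_pairs n \<and> (y, x) \<notin> D)"

lemma finite_upper_pairs: "finite (upper_pairs n)"
  by (rule finite_subset[of _ "{0..<n} \<times> {0..<n}"]) (auto simp: upper_pairs_def)

lemma orient_if_less:
  assumes "D \<subseteq> upper_pairs n" and "x < y"
  shows "orient n D x y \<longleftrightarrow> (x, y) \<in> D"
  using assms unfolding orient_def upper_pairs_def by auto

lemma orient_if_greater: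
  assumes "D \<subseteq> upper_pairs n" and "y < x" and "x < n"
  shows "orient n D x y \<longleftrightarrow> (y, x) \<notin> D"
  using assms unfolding orient_def upper_pairs_def by auto

lemma tournament_orient:
  assumes "D \<subseteq> upper_pairs n"
  shows "tournament {0..<n} (orient n D)"
proof -
  have ordered: "x < y \<and> x < n \<and> y < n" if "(x, y) \<in> D" for x y
    using assms that unfolding upper_pairs_def by auto
  then have arcs: "orient n D x y \<Longrightarrow> x < n \<and> y < n" and irrefl: "\<not> orient n D x x" for x y
    unfolding orient_def upper_pairs_def by auto
  have asym: "orient n D x y \<longleftrightarrow> \<not> orient n D y x" if "x < n" "y < n" "x \<noteq> y" for x y
  proof (cases "x < y")
    case True
    then show ?thesis
      using orient_if_less[OF assms True] orient_if_greater[OF assms True \<open>y < n\<close>] by simp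
  next
    case False
    then have "y < x" using \<open>x \<noteq> y\<close> by simp
    then show ?thesis
      using orient_if_less[OF assms \<open>y < x\<close>] orient_if_greater[OF assms \<open>y < x\<close> \<open>x < n\<close>] by simp
  qed
  have "\<forall>x\<in>{0..<n}. \<forall>y\<in>{0..<n}. x \<noteq> y \<longrightarrow>
      (orient n D x y \<or> orient n D y x) \<and> \<not> (orient n D x y \<and> orient n D y x)"
  proof (intro ballI impI)
    fix x y assume "x \<in> {0..<n}" "y \<in> {0..<n}" "x \<noteq> y"
    then have "orient n D x y \<longleftrightarrow> \<not> orient n D y x" by (intro asym) auto
    then show "(orient n D x y \<or> orient n D y x) \<and> \<not> (orient n D x y \<and> orient n D y x)"
      by blast
  qed
  then show ?thesis
    unfolding tournament_def
  proof (intro conjI)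
    show "\<forall>x y. orient n D x y \<longrightarrow> x \<in> {0..<n} \<and> y \<in> {0..<n}"
      using arcs by simp
    show "\<forall>x\<in>{0..<n}. \<not> orient n D x x"
      using irrefl by simp
  qed simp_all
qed

lemma orient_Diff_upper_pairs:
  assumes "D \<subseteq> upper_pairs n"
  shows "orient n (upper_pairs n - D) x y \<longleftrightarrow> orient n D y x"
  using assms unfolding orient_def upper_pairs_def by auto

definition pairs_at :: "nat \<Rightarrow> nat \<Rightarrow> (nat \<times> nat) set" where
  "pairs_at n v = {p \<in> upper_pairs n. fst p = v \<or> snd p = v}"

definition out_neighbours :: "nat \<Rightarrow> (nat \<times> nat) set \<Rightarrow> nat \<Rightarrow> nat set" where
  "out_neighbours n D v = {y \<in> {0..<n} - {v}. orient n D v y}"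

lemma pairs_at_subset: "pairs_at n v \<subseteq> upper_pairs n"
  unfolding pairs_at_def by auto

lemma card_pairs_at_ge:
  assumes "v < n"
  shows "n - 1 \<le> card (pairs_at n v)"
proof -
  have "inj_on (\<lambda>y. (min v y, max v y)) ({0..<n} - {v})"
    unfolding inj_on_def min_def max_def by auto
  moreover have "(\<lambda>y. (min v y, max v y)) ` ({0..<n} - {v}) \<subseteq> pairs_at n v"
    using assms unfolding pairs_at_def upper_pairs_def min_def max_def by (auto split: if_splits)
  ultimately have "card ({0..<n} - {v}) \<le> card (pairs_at n v)"
    using finite_subset[OF pairs_at_subset finite_upper_pairs] by (intro card_inj_on_le)
  then show ?thesis using assms by simp
qed

lemma out_degree_orient:
  assumes "D \<subseteq> upper_pairs n"
  shows "out_degree {0..<n} (orient n D) v = card (out_neighbours n (D \<inter> pairs_at n v) v)"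
proof -
  have "\<not> orient n D v v"
    using assms unfolding orient_def upper_pairs_def by auto
  moreover have "orient n (D \<inter> pairs_at n v) v y \<longleftrightarrow> orient n D v y" for y
    using assms unfolding orient_def pairs_at_def by auto
  ultimately show ?thesis
    unfolding out_degree_def out_neighbours_def by (intro arg_cong[where f = card]) auto
qed

lemma inj_on_out_neighbours:
  assumes "v < n"
  shows "inj_on (\<lambda>R. out_neighbours n R v) (Pow (pairs_at n v))"
proof -
  let ?W = "\<lambda>R. out_neighbours n R v"
  have upper: "b \<in> ?W R \<longleftrightarrow> (v, b) \<in> R" if "R \<subseteq> upper_pairs n" "v < b" "b < n" for R b
    using orient_if_less[OF that(1,2)] that unfolding out_neighbours_def by auto
  have lower: "a \<in> ?W R \<longleftrightarrow> (a, v) \<notin> R" if "R \<subseteq> upper_pairs n" "a < v" for R a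
    using orient_if_greater[OF that(1,2) assms] that assms unfolding out_neighbours_def by auto
  have recover: "R = {p \<in> pairs_at n v. if fst p = v then snd p \<in> ?W R else fst p \<notin> ?W R}"
    if "R \<subseteq> pairs_at n v" for R
  proof (rule set_eqI)
    fix p
    show "p \<in> R \<longleftrightarrow> p \<in> {p \<in> pairs_at n v. if fst p = v then snd p \<in> ?W R else fst p \<notin> ?W R}"
    proof (cases "p \<in> pairs_at n v")
      case True
      then obtain a b where "p = (a, b)" "a < b" "b < n" "a = v \<or> b = v"
        unfolding pairs_at_def upper_pairs_def by auto
      with True that pairs_at_subset upper[of R b] lower[of R a] show ?thesis by auto
    qed (use that in auto)
  qed
  show ?thesis
  proof (rule inj_onI)
    fix R1 R2 assume "R1 \<in> Pow (pairs_at n v)" "R2 \<in> Pow (pairs_at n v)" "?W R1 = ?W R2"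
    have "R1 = {p \<in> pairs_at n v. if fst p = v then snd p \<in> ?W R1 else fst p \<notin> ?W R1}"
      using \<open>R1 \<in> Pow (pairs_at n v)\<close> by (intro recover) simp
    also have "\<dots> = {p \<in> pairs_at n v. if fst p = v then snd p \<in> ?W R2 else fst p \<notin> ?W R2}"
      by (simp only: \<open>?W R1 = ?W R2\<close>)
    also have "\<dots> = R2"
      using \<open>R2 \<in> Pow (pairs_at n v)\<close> by (intro recover[symmetric]) simp
    finally show "R1 = R2" .
  qed
qed

text \<open>Only the pairs at \<open>v\<close> matter, and they are in bijection with the out-neighbourhoods of \<open>v\<close>,
  whose number of size at least \<open>t\<close> is at most \<open>3^(n-1)/2^t\<close>.\<close>

lemma card_out_degree_ge:
  assumes "v < n"
  shows "card {D \<in> Pow (upper_pairs n). t \<le> out_degree {0..<n} (orient n D) v} * 2 ^ (n - 1 + t)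
    \<le> 3 ^ (n - 1) * 2 ^ card (upper_pairs n)"
proof -
  let ?Q = "pairs_at n v" and ?N = "card (upper_pairs n)"
  let ?Bad = "{D \<in> Pow (upper_pairs n). t \<le> out_degree {0..<n} (orient n D) v}"
  let ?Bad_at = "{R \<in> Pow ?Q. t \<le> card (out_neighbours n R v)}"
  have "(\<lambda>R. out_neighbours n R v) ` ?Bad_at \<subseteq> {X \<in> Pow ({0..<n} - {v}). t \<le> card X}"
    unfolding out_neighbours_def by auto
  then have "card ?Bad_at \<le> card {X \<in> Pow ({0..<n} - {v}). t \<le> card X}"
    using inj_on_out_neighbours[OF assms] by (intro card_inj_on_le) (auto intro: inj_on_subset)
  then have "card ?Bad_at * 2 ^ t \<le> card {X \<in> Pow ({0..<n} - {v}). t \<le> card X} * 2 ^ t"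
    by (rule mult_le_mono1)
  also have "\<dots> \<le> 3 ^ card ({0..<n} - {v})"
    by (rule card_large_subsets_le) simp
  finally have few: "card ?Bad_at * 2 ^ t \<le> 3 ^ (n - 1)"
    using assms by simp
  have "?Bad = {D \<in> Pow (upper_pairs n). t \<le> card (out_neighbours n (D \<inter> ?Q) v)}"
    using out_degree_orient by auto
  then have card_Bad: "card ?Bad = card ?Bad_at * 2 ^ (?N - card ?Q)"
    using card_Pow_filter_Int[OF finite_upper_pairs pairs_at_subset,
        where \<Phi> = "\<lambda>R. t \<le> card (out_neighbours n R v)"] by simp
  have "card ?Bad * 2 ^ (n - 1 + t) \<le> card ?Bad * 2 ^ (card ?Q + t)"
    using card_pairs_at_ge[OF assms] by (intro mult_le_mono2 power_increasing) simp_all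
  also have "\<dots> = card ?Bad_at * 2 ^ t * 2 ^ ?N"
    unfolding card_Bad using card_mono[OF finite_upper_pairs pairs_at_subset]
    by (simp add: power_add[symmetric] ac_simps)
  also have "\<dots> \<le> 3 ^ (n - 1) * 2 ^ ?N"
    using few by simp
  finally show ?thesis .
qed

lemma card_in_degree_ge:
  assumes "v < n"
  shows "card {D \<in> Pow (upper_pairs n). t \<le> in_degree {0..<n} (orient n D) v} * 2 ^ (n - 1 + t)
    \<le> 3 ^ (n - 1) * 2 ^ card (upper_pairs n)"
proof -
  have "bij_betw (\<lambda>D. upper_pairs n - D)
      {D \<in> Pow (upper_pairs n). t \<le> in_degree {0..<n} (orient n D) v}
      {D \<in> Pow (upper_pairs n). t \<le> out_degree {0..<n} (orient n D) v}"
    by (rule bij_betw_byWitness[where f' = "\<lambda>D. upper_pairs n - D"])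
      (auto simp: in_degree_def out_degree_def orient_Diff_upper_pairs double_diff)
  then have "card {D \<in> Pow (upper_pairs n). t \<le> in_degree {0..<n} (orient n D) v} =
      card {D \<in> Pow (upper_pairs n). t \<le> out_degree {0..<n} (orient n D) v}"
    by (rule bij_betw_same_card)
  with card_out_degree_ge[OF assms] show ?thesis by (simp only:)
qed

definition pairs_between :: "nat set \<Rightarrow> nat set \<Rightarrow> (nat \<times> nat) set" where
  "pairs_between A1 A2 = (\<lambda>(a, b). (min a b, max a b)) ` (A1 \<times> A2)"

lemma pairs_between_subset:
  assumes "A1 \<subseteq> {0..<n}" and "A2 \<subseteq> {0..<n}" and "A1 \<inter> A2 = {}"
  shows "pairs_between A1 A2 \<subseteq> upper_pairs n"
proof
  fix p assume "p \<in> pairs_between A1 A2"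
  then obtain a b where "a \<in> A1" "b \<in> A2" "p = (min a b, max a b)" unfolding pairs_between_def by auto
  moreover have "a \<noteq> b" "a < n" "b < n" using calculation assms by auto
  ultimately show "p \<in> upper_pairs n" unfolding upper_pairs_def by (auto simp: min_def max_def)
qed

lemma card_pairs_between:
  assumes "A1 \<inter> A2 = {}"
  shows "card (pairs_between A1 A2) = card A1 * card A2"
proof -
  have "inj_on (\<lambda>(a, b). (min a b, max a b)) (A1 \<times> A2)"
  proof (rule inj_onI)
    fix p q assume "p \<in> A1 \<times> A2" "q \<in> A1 \<times> A2"
      and eq: "(\<lambda>(a, b). (min a b, max a b)) p = (\<lambda>(a, b). (min a b, max a b)) q"
    then obtain a b c d where "p = (a, b)" "q = (c, d)" "a \<noteq> d" "c \<noteq> b"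
      using assms by blast
    with eq show "p = q" by (auto simp: min_def max_def split: if_splits)
  qed
  then show ?thesis
    unfolding pairs_between_def by (simp add: card_image card_cartesian_product)
qed

lemma orient_Int_pairs_between:
  assumes D: "D \<subseteq> upper_pairs n" and A: "A1 \<subseteq> {0..<n}" "A2 \<subseteq> {0..<n}" "A1 \<inter> A2 = {}"
    and arcs: "\<forall>a1\<in>A1. \<forall>a2\<in>A2. orient n D a1 a2"
  shows "D \<inter> pairs_between A1 A2 = {(a, b). a \<in> A1 \<and> b \<in> A2 \<and> a < b}"
proof (intro equalityI subsetI)
  fix p assume "p \<in> D \<inter> pairs_between A1 A2"
  then obtain a b where ab: "a \<in> A1" "b \<in> A2" "p = (min a b, max a b)" "p \<in> D"
    unfolding pairs_between_def by auto
  with A have "a \<noteq> b" "a < n" by auto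
  show "p \<in> {(a, b). a \<in> A1 \<and> b \<in> A2 \<and> a < b}"
  proof (cases "a < b")
    case True
    with ab show ?thesis by auto
  next
    case False
    with ab \<open>a \<noteq> b\<close> have "p = (b, a)" "b < a" by auto
    with arcs ab orient_if_greater[OF D \<open>b < a\<close> \<open>a < n\<close>] show ?thesis by auto
  qed
next
  fix p assume "p \<in> {(a, b). a \<in> A1 \<and> b \<in> A2 \<and> a < b}"
  then obtain a b where ab: "a \<in> A1" "b \<in> A2" "a < b" "p = (a, b)" by auto
  then have "p \<in> D" using arcs orient_if_less[OF D \<open>a < b\<close>] by auto
  moreover have "p \<in> pairs_between A1 A2"
    unfolding pairs_between_def using ab by (auto intro!: image_eqI[of _ _ "(a, b)"])
  ultimately show "p \<in> D \<inter> pairs_between A1 A2" by blast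
qed

lemma card_orient_biclique_on:
  assumes A: "A1 \<subseteq> {0..<n}" "A2 \<subseteq> {0..<n}" "A1 \<inter> A2 = {}" "card A1 = s" "card A2 = s"
  shows "card {D \<in> Pow (upper_pairs n). \<forall>a1\<in>A1. \<forall>a2\<in>A2. orient n D a1 a2} * 2 ^ (s * s)
    \<le> 2 ^ card (upper_pairs n)"
proof -
  let ?Q = "pairs_between A1 A2" and ?N = "card (upper_pairs n)"
  let ?R0 = "{(a, b). a \<in> A1 \<and> b \<in> A2 \<and> a < b}"
  have Q: "?Q \<subseteq> upper_pairs n" using A(1-3) by (rule pairs_between_subset)
  have card_Q: "card ?Q = s * s" using A by (simp add: card_pairs_between)
  have "card {R \<in> Pow ?Q. R = ?R0} \<le> card {?R0}" by (rule card_mono) auto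
  then have unique: "card {R \<in> Pow ?Q. R = ?R0} \<le> 1" by simp
  have "{D \<in> Pow (upper_pairs n). \<forall>a1\<in>A1. \<forall>a2\<in>A2. orient n D a1 a2}
      \<subseteq> {D \<in> Pow (upper_pairs n). D \<inter> ?Q = ?R0}"
    using orient_Int_pairs_between[OF _ A(1-3)] by auto
  then have "card {D \<in> Pow (upper_pairs n). \<forall>a1\<in>A1. \<forall>a2\<in>A2. orient n D a1 a2}
      \<le> card {R \<in> Pow ?Q. R = ?R0} * 2 ^ (?N - card ?Q)"
    unfolding card_Pow_filter_Int[OF finite_upper_pairs Q, where \<Phi> = "\<lambda>R. R = ?R0", symmetric]
    by (rule card_mono[rotated]) (simp add: finite_upper_pairs)
  also have "\<dots> \<le> 2 ^ (?N - s * s)"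
    using unique card_Q by simp
  finally have "card {D \<in> Pow (upper_pairs n). \<forall>a1\<in>A1. \<forall>a2\<in>A2. orient n D a1 a2} * 2 ^ (s * s)
      \<le> 2 ^ (?N - s * s) * 2 ^ (s * s)"
    by (rule mult_le_mono1)
  also have "\<dots> = 2 ^ ?N"
    using card_mono[OF finite_upper_pairs Q] card_Q by (simp flip: power_add)
  finally show ?thesis .
qed

lemma card_orient_large_degree:
  assumes "481 \<le> n"
  shows "2 * card {D \<in> Pow (upper_pairs n). \<exists>v<n. 2 * n < 3 * out_degree {0..<n} (orient n D) v \<or>
      2 * n < 3 * in_degree {0..<n} (orient n D) v} < 2 ^ card (upper_pairs n)"
proof -
  define t where "t = 2 * n div 3 + 1"
  define N where "N = card (upper_pairs n)"
  define Out where "Out v = {D \<in> Pow (upper_pairs n). t \<le> out_degree {0..<n} (orient n D) v}" for v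
  define In where "In v = {D \<in> Pow (upper_pairs n). t \<le> in_degree {0..<n} (orient n D) v}" for v
  have threshold: "2 * n < 3 * d \<longleftrightarrow> t \<le> d" for d unfolding t_def by presburger
  have "card (\<Union>v<n. Out v \<union> In v) \<le> (\<Sum>v<n. card (Out v) + card (In v))"
    by (rule order_trans[OF card_UN_le sum_mono]) (simp_all add: card_Un_le)
  then have "card (\<Union>v<n. Out v \<union> In v) * 2 ^ (n - 1 + t)
      \<le> (\<Sum>v<n. card (Out v) + card (In v)) * 2 ^ (n - 1 + t)"
    by (rule mult_le_mono1)
  also have "\<dots> = (\<Sum>v<n. card (Out v) * 2 ^ (n - 1 + t) + card (In v) * 2 ^ (n - 1 + t))"
    by (simp add: sum_distrib_right add_mult_distrib)
  also have "\<dots> \<le> (\<Sum>v<n. 3 ^ (n - 1) * 2 ^ N + 3 ^ (n - 1) * 2 ^ N)"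
  proof (rule sum_mono)
    fix v assume "v \<in> {..<n}"
    then have "v < n" by simp
    show "card (Out v) * 2 ^ (n - 1 + t) + card (In v) * 2 ^ (n - 1 + t)
        \<le> 3 ^ (n - 1) * 2 ^ N + 3 ^ (n - 1) * 2 ^ N"
      unfolding Out_def In_def N_def
      using card_out_degree_ge[OF \<open>v < n\<close>] card_in_degree_ge[OF \<open>v < n\<close>] by (rule add_mono)
  qed
  also have "\<dots> = 2 * n * 3 ^ (n - 1) * 2 ^ N" by simp
  finally have "2 * (card (\<Union>v<n. Out v \<union> In v) * 2 ^ (n - 1 + t)) \<le> 2 * (2 * n * 3 ^ (n - 1) * 2 ^ N)"
    by (rule mult_le_mono2)
  also have "\<dots> = 4 * n * 3 ^ (n - 1) * 2 ^ N" by simp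
  also have "\<dots> < 2 ^ (n - 1 + t) * 2 ^ N"
    using degree_union_bound[OF assms] unfolding t_def by simp
  finally have "2 * card (\<Union>v<n. Out v \<union> In v) < 2 ^ N" by simp
  moreover have "(\<Union>v<n. Out v \<union> In v) = {D \<in> Pow (upper_pairs n). \<exists>v<n.
      2 * n < 3 * out_degree {0..<n} (orient n D) v \<or> 2 * n < 3 * in_degree {0..<n} (orient n D) v}"
    unfolding Out_def In_def threshold by auto
  ultimately show ?thesis unfolding N_def by simp
qed

lemma card_orient_has_directed_biclique:
  assumes "22 \<le> s" and "n \<le> s * s"
  shows "2 * card {D \<in> Pow (upper_pairs n). has_directed_biclique {0..<n} (orient n D) s}
    < 2 ^ card (upper_pairs n)"
proof -
  define N where "N = card (upper_pairs n)"
  define Pairs where "Pairs = {(A1, A2). A1 \<subseteq> {0..<n} \<and> A2 \<subseteq> {0..<n} \<and> A1 \<inter> A2 = {} \<and>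
      card A1 = s \<and> card A2 = s}"
  define Ev where "Ev p = {D \<in> Pow (upper_pairs n). \<forall>a1\<in>fst p. \<forall>a2\<in>snd p. orient n D a1 a2}" for p
  have "finite Pairs" and card_Pairs: "card Pairs \<le> (n choose s) ^ 2"
    using finite_disjoint_subset_pairs[of "{0..<n}" s] card_disjoint_subset_pairs_le[of "{0..<n}" s]
    unfolding Pairs_def by simp_all
  have "card (\<Union>p\<in>Pairs. Ev p) * 2 ^ (s * s) \<le> (\<Sum>p\<in>Pairs. card (Ev p)) * 2 ^ (s * s)"
    using card_UN_le[OF \<open>finite Pairs\<close>] by (rule mult_le_mono1)
  also have "\<dots> = (\<Sum>p\<in>Pairs. card (Ev p) * 2 ^ (s * s))"
    by (rule sum_distrib_right)
  also have "\<dots> \<le> (\<Sum>p\<in>Pairs. 2 ^ N)"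
    by (rule sum_mono) (use card_orient_biclique_on in \<open>auto simp: Pairs_def Ev_def N_def\<close>)
  also have "\<dots> \<le> (n choose s) ^ 2 * 2 ^ N"
    using card_Pairs by simp
  finally have "2 * card (\<Union>p\<in>Pairs. Ev p) * 2 ^ (s * s) \<le> 2 * (n choose s) ^ 2 * 2 ^ N"
    by simp
  also have "\<dots> < 2 ^ (s * s) * 2 ^ N"
    using bipartite_union_bound[OF assms] by simp
  finally have "2 * card (\<Union>p\<in>Pairs. Ev p) < 2 ^ N" by simp
  moreover have "(\<Union>p\<in>Pairs. Ev p) =
      {D \<in> Pow (upper_pairs n). has_directed_biclique {0..<n} (orient n D) s}" (is "_ = ?Bad")
  proof (intro equalityI subsetI)
    fix D assume "D \<in> (\<Union>p\<in>Pairs. Ev p)"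
    then obtain A1 A2 where "(A1, A2) \<in> Pairs" "D \<in> Ev (A1, A2)" by auto
    then have "D \<in> Pow (upper_pairs n)" "A1 \<subseteq> {0..<n}" "A2 \<subseteq> {0..<n}" "A1 \<inter> A2 = {}"
      "card A1 = s" "card A2 = s" "\<forall>a1\<in>A1. \<forall>a2\<in>A2. orient n D a1 a2"
      unfolding Pairs_def Ev_def by auto
    then show "D \<in> ?Bad" unfolding has_directed_biclique_def by blast
  next
    fix D assume "D \<in> ?Bad"
    then obtain A1 A2 where "(A1, A2) \<in> Pairs" "D \<in> Ev (A1, A2)"
      unfolding has_directed_biclique_def Pairs_def Ev_def by auto
    then show "D \<in> (\<Union>p\<in>Pairs. Ev p)" by blast
  qed
  ultimately show ?thesis unfolding N_def by simp
qed

lemma exists_good_orientation: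
  assumes "481 \<le> n" and "22 \<le> s" and "n \<le> s * s"
  obtains D where "D \<subseteq> upper_pairs n"
    and "\<forall>v<n. 3 * out_degree {0..<n} (orient n D) v \<le> 2 * n \<and>
      3 * in_degree {0..<n} (orient n D) v \<le> 2 * n"
    and "\<not> has_directed_biclique {0..<n} (orient n D) s"
proof -
  let ?Deg = "{D \<in> Pow (upper_pairs n). \<exists>v<n. 2 * n < 3 * out_degree {0..<n} (orient n D) v \<or>
      2 * n < 3 * in_degree {0..<n} (orient n D) v}"
  let ?Bip = "{D \<in> Pow (upper_pairs n). has_directed_biclique {0..<n} (orient n D) s}"
  have "card (?Deg \<union> ?Bip) < card (Pow (upper_pairs n))"
    using card_Un_le[of ?Deg ?Bip] card_orient_large_degree[OF assms(1)]
      card_orient_has_directed_biclique[OF assms(2,3)]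
    by (simp add: card_Pow finite_upper_pairs)
  then have "\<not> Pow (upper_pairs n) \<subseteq> ?Deg \<union> ?Bip"
    using card_mono[of "?Deg \<union> ?Bip" "Pow (upper_pairs n)"] by (auto simp: finite_upper_pairs)
  then obtain D where "D \<in> Pow (upper_pairs n)" "D \<notin> ?Deg" "D \<notin> ?Bip" by blast
  show thesis
  proof (rule that)
    show "D \<subseteq> upper_pairs n" using \<open>D \<in> Pow (upper_pairs n)\<close> by simp
    show "\<forall>v<n. 3 * out_degree {0..<n} (orient n D) v \<le> 2 * n \<and>
        3 * in_degree {0..<n} (orient n D) v \<le> 2 * n"
      unfolding not_less[symmetric] using \<open>D \<in> Pow (upper_pairs n)\<close> \<open>D \<notin> ?Deg\<close> by blast
    show "\<not> has_directed_biclique {0..<n} (orient n D) s"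
      using \<open>D \<in> Pow (upper_pairs n)\<close> \<open>D \<notin> ?Bip\<close> by blast
  qed
qed

theorem lemma4p1:
  fixes n :: nat
  assumes "n \<ge> 1"
    and "2 * real n * exp (- real n / 80) + real n powr sqrt (real n) * 2 powr (- (real n - 1))
          + real n powr (real n / 7 + 1) * 2 powr (- (real n ^ 2) / 20) < 1"
  shows "\<exists>(V :: nat set) F. tournament V F \<and> card V = n \<and>
     (\<forall>x\<in>V. real (out_degree V F x) \<le> 2 * real n / 3 \<and> real (in_degree V F x) \<le> 2 * real n / 3) \<and>
     \<not> (\<exists>A1 A2. A1 \<subseteq> V \<and> A2 \<subseteq> V \<and> A1 \<inter> A2 = {} \<and>
          card A1 = nat \<lceil>sqrt (real n)\<rceil> \<and> card A2 = nat \<lceil>sqrt (real n)\<rceil> \<and>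
          (\<forall>a1\<in>A1. \<forall>a2\<in>A2. F a1 a2)) \<and>
     (\<forall>S \<subseteq> V. real (card S) \<ge> 2 * real n / 13 - sqrt (real n) \<longrightarrow> has_dicycle S (induced F S))"
proof -
  have "2 * real n * exp (- real n / 80) < 1"
    using assms(2) by (smt (verit) powr_ge_zero mult_nonneg_nonneg)
  with assms(1) have n: "481 \<le> n" by (rule ge_481_if_exp_bound)
  define s where "s = nat \<lceil>sqrt (real n)\<rceil>"
  note s = ceiling_sqrt_bounds[OF n s_def]
  obtain D where D: "D \<subseteq> upper_pairs n"
    and degree: "\<forall>v<n. 3 * out_degree {0..<n} (orient n D) v \<le> 2 * n \<and>
      3 * in_degree {0..<n} (orient n D) v \<le> 2 * n"
    and no_biclique: "\<not> has_directed_biclique {0..<n} (orient n D) s"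
    using exists_good_orientation[OF n s(1,2)] by blast
  have tournament: "tournament {0..<n} (orient n D)" using D by (rule tournament_orient)
  have "has_dicycle S (induced (orient n D) S)"
    if "S \<subseteq> {0..<n}" and "real (card S) \<ge> 2 * real n / 13 - sqrt (real n)" for S
  proof (rule has_dicycle_if_no_directed_biclique[OF tournament that(1) _ no_biclique])
    show "2 * s \<le> card S" using that(2) s(3) by linarith
  qed
  with tournament degree no_biclique show ?thesis
    unfolding s_def[symmetric] has_directed_biclique_def
    by (intro exI[of _ "{0..<n}"] exI[of _ "orient n D"]) (auto simp flip: of_nat_mult)
qed

end
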